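(* If $M$ and $N$ are positive integers with $N\ge M$, then there exists an equal norm integer frame with $N$ elements in $\mathcal{H}_M$, i.e. an $M\times N$ integer matrix of rank $M$ all of whose columns have the same Euclidean norm.
   Context: $\mathcal{H}_M$ is the real $M$-dimensional Hilbert space, identified with $\mathbb{R}^M$ via a fixed orthonormal basis; an integer frame is a frame (spanning family) whose vectors have integer coordinates with respect to this basis. *)

theory Defs
  imports "HOL-Analysis.Analysis"
begin

text \<open>H_M is identified with R^M; a vector of R^M is represented as a function
  nat => real vanishing outside {..<M}. An integer frame with N elements is a family
  of N vectors (columns j < N of an M x N integer matrix A, entry A i j) whose real linear
  span is all of R^M (equivalently the matrix has rank M).\<close>

definition RM :: "nat \<Rightarrow> (nat \<Rightarrow> real) set" where
  "RM M = {v. \<forall>i\<ge>M. v i = 0}"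

definition col :: "nat \<Rightarrow> (nat \<Rightarrow> nat \<Rightarrow> int) \<Rightarrow> nat \<Rightarrow> (nat \<Rightarrow> real)" where
  "col M A j = (\<lambda>i. if i < M then real_of_int (A i j) else 0)"

definition col_norm_sq :: "nat \<Rightarrow> (nat \<Rightarrow> nat \<Rightarrow> int) \<Rightarrow> nat \<Rightarrow> int" where
  "col_norm_sq M A j = (\<Sum>i<M. (A i j)\<^sup>2)"

definition is_integer_frame :: "nat \<Rightarrow> nat \<Rightarrow> (nat \<Rightarrow> nat \<Rightarrow> int) \<Rightarrow> bool" where
  "is_integer_frame M N A \<longleftrightarrow>
     (\<forall>v\<in>RM M. \<exists>c :: nat \<Rightarrow> real. v = (\<lambda>i. \<Sum>j<N. c j * col M A j i))"

definition equal_norm :: "nat \<Rightarrow> nat \<Rightarrow> (nat \<Rightarrow> nat \<Rightarrow> int) \<Rightarrow> bool" where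
  "equal_norm M N A \<longleftrightarrow> (\<forall>j<N. \<forall>k<N. col_norm_sq M A j = col_norm_sq M A k)"

end

theory Submission
  imports Defs
begin

text \<open>Take the M standard basis vectors and repeat them cyclically to get N columns:
  the first M columns already span, and every column has norm 1.\<close>

lemma is_integer_frame_if_identity_block:
  assumes "M \<le> N" and identity: "\<And>i j. i < M \<Longrightarrow> j < M \<Longrightarrow> A i j = (if i = j then 1 else 0)"
  shows "is_integer_frame M N A"
  unfolding is_integer_frame_def
proof
  fix v assume v: "v \<in> RM M"
  define c where "c = (\<lambda>j. if j < M then v j else 0)"
  have "v i = (\<Sum>j<N. c j * col M A j i)" for i
  proof (cases "i < M")
    case True
    have "(\<Sum>j<N. c j * col M A j i) = (\<Sum>j<N. if j = i then v i else 0)"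
      using True by (intro sum.cong) (auto simp: c_def col_def identity)
    also have "\<dots> = v i" using True \<open>M \<le> N\<close> by simp
    finally show ?thesis by simp
  next
    case False
    then show ?thesis using v by (simp add: RM_def col_def)
  qed
  then show "\<exists>c. v = (\<lambda>i. \<Sum>j<N. c j * col M A j i)" by blast
qed

lemma equal_norm_if_col_norm_sq_const:
  assumes "\<And>j. j < N \<Longrightarrow> col_norm_sq M A j = r"
  shows "equal_norm M N A"
  using assms by (simp add: equal_norm_def)

definition cyclic_unit_matrix :: "nat \<Rightarrow> nat \<Rightarrow> nat \<Rightarrow> int" where
  "cyclic_unit_matrix M = (\<lambda>i j. if i = j mod M then 1 else 0)"

lemma col_norm_sq_cyclic_unit_matrix:
  assumes "0 < M"
  shows "col_norm_sq M (cyclic_unit_matrix M) j = 1"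
proof -
  have "col_norm_sq M (cyclic_unit_matrix M) j = (\<Sum>i<M. if i = j mod M then 1 else 0)"
    unfolding col_norm_sq_def cyclic_unit_matrix_def by (intro sum.cong) auto
  also have "\<dots> = 1" using assms by simp
  finally show ?thesis .
qed

lemma cyclic_unit_matrix_identity_block:
  "i < M \<Longrightarrow> j < M \<Longrightarrow> cyclic_unit_matrix M i j = (if i = j then 1 else 0)"
  by (simp add: cyclic_unit_matrix_def)

theorem theorem7p1:
  fixes M N :: nat
  assumes "0 < M" and "M \<le> N"
  shows "\<exists>A :: nat \<Rightarrow> nat \<Rightarrow> int. is_integer_frame M N A \<and> equal_norm M N A"
proof (intro exI conjI)
  show "is_integer_frame M N (cyclic_unit_matrix M)"
    using \<open>M \<le> N\<close> cyclic_unit_matrix_identity_block by (rule is_integer_frame_if_identity_block)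
  show "equal_norm M N (cyclic_unit_matrix M)"
    using col_norm_sq_cyclic_unit_matrix[OF \<open>0 < M\<close>] by (rule equal_norm_if_col_norm_sq_const)
qed

end
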